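(* Let $r\ge1$ be an integer and $n=2r$ or $n=2r-1$. Let $\xi_j=e^{2\pi i(j-1)/n}$, $\zeta_j=e^{2\pi i(j-r)/n}$ for $j=1,\dots,n$. For $0<\vartheta<\frac\pi{2n}$ let $\mathbb S_n(\vartheta)=\{z:-\frac\pi2-\frac\pi n+\vartheta<\arg z<-\frac\pi2+\frac{3\pi}n-\vartheta\}$ if $n=2r$ and $\mathbb S_n(\vartheta)=\{z:-\frac\pi2-\frac\pi n+\vartheta<\arg z<-\frac\pi2+\frac{2\pi}n-\vartheta\}$ if $n=2r-1$. Then: (1.1) for $k=1,\dots,r$, $\operatorname{Im}(\xi_kz+\zeta_{r-k+1}\overline z)=0$ for all $z\in\mathbb C$; (1.2) for $k,j\in\{1,\dots,r\}$ with $k+j\ge r+2$ and all $z\in\mathbb S_n(\vartheta)$, $\operatorname{Im}(\xi_kz+\zeta_j\overline z)\ge2\sin\big(\frac{k+j-r-1}n\pi\big)\sin\vartheta\cdot|z|$; (2.1) for $k=1,\dots,n-r$, $\operatorname{Im}(\xi_{k+r}z+\zeta_{n-k+1}\overline z)=0$ for all $z\in\mathbb C$; (2.2) for $k,j\in\{1,\dots,n-r\}$ with $k+j\le n-r$ and all $z\in\mathbb S_n(\vartheta)$, $\operatorname{Im}(\xi_{k+r}z+\zeta_{j+r}\overline z)\ge2\sin\big(\frac{n-r-k-j+1}n\pi\big)\sin\vartheta\cdot|z|$ if $n=2r$, and $\ge2\sin\big(\frac{n-r-k-j+1}n\pi\big)\sin(\frac\pi n+\vartheta)\cdot|z|$ if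 $n=2r-1$. *)

theory Defs
  imports "HOL-Analysis.Analysis"
begin

definition xi :: "nat \<Rightarrow> nat \<Rightarrow> complex" where
  "xi n j = exp (2 * pi * \<i> * complex_of_real ((real j - 1) / real n))"

definition zeta :: "nat \<Rightarrow> nat \<Rightarrow> nat \<Rightarrow> complex" where
  "zeta n r j = exp (2 * pi * \<i> * complex_of_real ((real j - real r) / real n))"

text \<open>The sector S_n(theta); arg is the principal argument Arg (values in (-pi,pi]).\<close>
definition sector :: "nat \<Rightarrow> nat \<Rightarrow> real \<Rightarrow> complex set" where
  "sector n r \<theta> =
     (if n = 2 * r
      then {z. - pi / 2 - pi / real n + \<theta> < Arg z \<and> Arg z < - pi / 2 + 3 * pi / real n - \<theta>}
      else {z. - pi / 2 - pi / real n + \<theta> < Arg z \<and> Arg z < - pi / 2 + 2 * pi / real n - \<theta>})"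

end

theory Submission
  imports Defs
begin

text \<open>
  Writing \<open>z = \<rho> cis \<phi>\<close>, the sum-to-product formula gives
  \<open>Im (exp (2\<pi>ix) z + exp (2\<pi>iy) cnj z) = 2\<rho> sin (\<pi>(x + y)) cos (\<pi>(x - y) + \<phi>)\<close>.
  For \<open>\<xi>\<^sub>k\<close> and \<open>\<zeta>\<^sub>j\<close> the sine factor is \<open>sin ((k + j - r - 1)\<pi>/n)\<close>, which vanishes on the
  antidiagonals \<open>k + j = r + 1\<close> and \<open>k + j = n + r + 1\<close> and is nonnegative in between.
  The cosine factor is \<open>cos ((k - j + r - 1)\<pi>/n + Arg z)\<close>; in the index ranges of the lemma
  this rotation keeps every \<open>z\<close> of the sector within angle \<open>\<pi>/2 - t\<close> of the positive real
  axis, where \<open>t = \<theta>\<close>, or \<open>t = \<pi>/n + \<theta>\<close> in the odd case of the second block, so the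
  cosine is at least \<open>sin t\<close>.
\<close>

lemma Im_exp_mult_plus_exp_mult_cnj:
  fixes x y :: real and z :: complex
  shows "Im (exp (2 * pi * \<i> * complex_of_real x) * z + exp (2 * pi * \<i> * complex_of_real y) * cnj z)
     = 2 * cmod z * sin (pi * (x + y)) * cos (pi * (x - y) + Arg z)"
proof -
  define \<rho> \<phi> where "\<rho> = cmod z" and "\<phi> = Arg z"
  have z: "z = complex_of_real \<rho> * cis \<phi>"
    using rcis_cmod_Arg[of z] by (simp add: rcis_def \<rho>_def \<phi>_def)
  have exp_cis: "\<And>t. exp (2 * pi * \<i> * complex_of_real t) = cis (2 * pi * t)"
    by (simp add: cis_conv_exp mult_ac)
  have "Im (exp (2 * pi * \<i> * complex_of_real x) * z + exp (2 * pi * \<i> * complex_of_real y) * cnj z)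
      = \<rho> * (sin (2 * pi * x + \<phi>) + sin (2 * pi * y - \<phi>))"
    unfolding exp_cis z by (simp add: sin_add sin_diff algebra_simps)
  also have "sin (2 * pi * x + \<phi>) + sin (2 * pi * y - \<phi>)
      = sin (pi * (x + y) + (pi * (x - y) + \<phi>)) + sin (pi * (x + y) - (pi * (x - y) + \<phi>))"
    by (simp add: algebra_simps)
  also have "\<dots> = 2 * sin (pi * (x + y)) * cos (pi * (x - y) + \<phi>)"
    by (simp add: sin_add sin_diff)
  finally show ?thesis by (simp add: \<rho>_def \<phi>_def)
qed

lemma sin_le_cos_if_abs_le:
  fixes x t :: real
  assumes "\<bar>x\<bar> \<le> pi / 2 - t" and "0 \<le> t"
  shows "sin t \<le> cos x"
proof -
  have "cos (pi / 2 - t) \<le> cos \<bar>x\<bar>"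
    using assms by (intro cos_monotone_0_pi_le) auto
  then show ?thesis by (simp add: sin_cos_eq)
qed

lemma Im_xi_zeta:
  "Im (xi n k * z + zeta n r j * cnj z)
     = 2 * cmod z * sin ((real k + real j - real r - 1) / real n * pi)
         * cos ((real k - real j + real r - 1) * (pi / real n) + Arg z)"
proof -
  have "pi * ((real k - 1) / real n + (real j - real r) / real n)
      = (real k + real j - real r - 1) / real n * pi"
    by (simp add: add_divide_distrib [symmetric] algebra_simps)
  moreover have "pi * ((real k - 1) / real n - (real j - real r) / real n)
      = (real k - real j + real r - 1) * (pi / real n)"
    by (simp add: divide_simps)
  ultimately show ?thesis
    unfolding xi_def zeta_def Im_exp_mult_plus_exp_mult_cnj by simp
qed

lemma Im_xi_zeta_eq_0:
  assumes "(real k + real j - real r - 1) / real n \<in> \<int>"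
  shows "Im (xi n k * z + zeta n r j * cnj z) = 0"
proof -
  have "sin ((real k + real j - real r - 1) / real n * pi) = 0"
    using assms by (simp only: sin_times_pi_eq_0)
  then show ?thesis
    unfolding Im_xi_zeta by simp
qed

lemma Im_xi_zeta_ge:
  assumes "0 \<le> sin ((real k + real j - real r - 1) / real n * pi)"
    and "\<bar>(real k - real j + real r - 1) * (pi / real n) + Arg z\<bar> \<le> pi / 2 - t"
    and "0 \<le> t"
  shows "2 * sin ((real k + real j - real r - 1) / real n * pi) * sin t * cmod z
      \<le> Im (xi n k * z + zeta n r j * cnj z)"
proof -
  let ?S = "sin ((real k + real j - real r - 1) / real n * pi)"
  have "sin t \<le> cos ((real k - real j + real r - 1) * (pi / real n) + Arg z)"
    using assms(2,3) by (rule sin_le_cos_if_abs_le)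
  then have "?S * sin t \<le> ?S * cos ((real k - real j + real r - 1) * (pi / real n) + Arg z)"
    using assms(1) by (rule mult_left_mono)
  then show ?thesis
    unfolding Im_xi_zeta by (simp add: mult_left_mono algebra_simps)
qed

lemma abs_rotate_Arg_le_in_sector:
  fixes c d :: real
  assumes "z \<in> sector n r \<theta>" and "0 \<le> c" and "1 + c \<le> d"
    and "d + c + (if n = 2 * r then 3 else 2) \<le> real n"
  shows "\<bar>d * (pi / real n) + Arg z\<bar> \<le> pi / 2 - (\<theta> + c * (pi / real n))"
proof -
  define q where "q = pi / real n"
  define m :: real where "m = (if n = 2 * r then 3 else 2)"
  have "real n > 0" using assms(2-4) by (simp split: if_splits)
  then have "q > 0" and nq: "real n * q = pi" by (simp_all add: q_def)
  have Arg: "- pi / 2 - q + \<theta> < Arg z" "Arg z < - pi / 2 + m * q - \<theta>"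
    using assms(1) by (auto simp: sector_def q_def m_def split: if_splits)
  have "c * q \<le> (d - 1) * q" "(d + m) * q \<le> (real n - c) * q"
    using \<open>q > 0\<close> assms(3,4) by (intro mult_right_mono; simp add: m_def)+
  then show ?thesis
    using Arg nq unfolding q_def [symmetric] abs_le_iff by (simp add: algebra_simps)
qed

lemma sin_times_pi_nonneg:
  fixes x :: real
  assumes "0 \<le> x" and "x \<le> 1"
  shows "0 \<le> sin (x * pi)"
  using assms by (intro sin_ge_zero) (simp_all add: mult_le_cancel_right1)

lemma Im_xi_zeta_first_antidiagonal:
  assumes "k \<le> r"
  shows "Im (xi n k * z + zeta n r (r - k + 1) * cnj z) = 0"
  using assms by (intro Im_xi_zeta_eq_0) (simp add: of_nat_diff)

lemma Im_xi_zeta_second_antidiagonal: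
  assumes "k \<le> n"
  shows "Im (xi n (k + r) * z + zeta n r (n - k + 1) * cnj z) = 0"
proof (rule Im_xi_zeta_eq_0)
  have "real (k + r) + real (n - k + 1) - real r - 1 = real n"
    using assms by (simp add: of_nat_diff)
  then show "(real (k + r) + real (n - k + 1) - real r - 1) / real n \<in> \<int>"
    by (cases "n = 0") simp_all
qed

lemma Im_xi_zeta_ge_first_block:
  assumes "n = 2 * r \<or> n = 2 * r - 1" and "0 \<le> \<theta>"
    and "k \<le> r" and "j \<le> r" and "r + 2 \<le> k + j" and "z \<in> sector n r \<theta>"
  shows "2 * sin ((real k + real j - real r - 1) / real n * pi) * sin \<theta> * cmod z
      \<le> Im (xi n k * z + zeta n r j * cnj z)"
proof (rule Im_xi_zeta_ge)
  have kj: "real r + 2 \<le> real k + real j" "real k \<le> real r" "real j \<le> real r"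
    using assms(3-5) by linarith+
  have n: "2 * real r - 1 \<le> real n"
    using assms(1,5) by auto
  show "0 \<le> sin ((real k + real j - real r - 1) / real n * pi)"
    using kj n by (intro sin_times_pi_nonneg) simp_all
  have "1 + 0 \<le> real k - real j + real r - 1"
    and "real k - real j + real r - 1 + 0 + (if n = 2 * r then 3 else 2) \<le> real n"
    using kj n by auto
  from abs_rotate_Arg_le_in_sector [OF assms(6) order_refl this]
  show "\<bar>(real k - real j + real r - 1) * (pi / real n) + Arg z\<bar> \<le> pi / 2 - \<theta>"
    by simp
qed (fact assms(2))

lemma Im_xi_zeta_ge_second_block:
  assumes "n = 2 * r \<or> n = 2 * r - 1" and "1 \<le> r" and "0 \<le> \<theta>"
    and "1 \<le> k" and "1 \<le> j" and "k + j \<le> n - r" and "z \<in> sector n r \<theta>"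
  shows "2 * sin ((real n - real r - real k - real j + 1) / real n * pi)
        * (if n = 2 * r then sin \<theta> else sin (pi / real n + \<theta>)) * cmod z
      \<le> Im (xi n (k + r) * z + zeta n r (j + r) * cnj z)"
proof -
  define c :: real where "c = (if n = 2 * r then 0 else 1)"
  have kj: "real k + real j + real r \<le> real n" "1 \<le> real k" "1 \<le> real j"
    using assms(4-6) by linarith+
  have n: "real n = 2 * real r - c"
    using assms(1,2) by (auto simp: c_def of_nat_diff)
  have "(real (k + r) + real (j + r) - real r - 1) / real n * pi
      = pi - (real n - real r - real k - real j + 1) / real n * pi"
    using kj by (simp add: field_simps)
  then have sin_eq: "sin ((real (k + r) + real (j + r) - real r - 1) / real n * pi)
      = sin ((real n - real r - real k - real j + 1) / real n * pi)"
    by simp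
  have sin_t: "sin (\<theta> + c * (pi / real n))
      = (if n = 2 * r then sin \<theta> else sin (pi / real n + \<theta>))"
    by (simp add: c_def add.commute)
  have "2 * sin ((real n - real r - real k - real j + 1) / real n * pi)
        * sin (\<theta> + c * (pi / real n)) * cmod z
      \<le> Im (xi n (k + r) * z + zeta n r (j + r) * cnj z)"
    unfolding sin_eq [symmetric]
  proof (rule Im_xi_zeta_ge)
    show "0 \<le> sin ((real (k + r) + real (j + r) - real r - 1) / real n * pi)"
      using kj unfolding sin_eq by (intro sin_times_pi_nonneg) simp_all
    show "\<bar>(real (k + r) - real (j + r) + real r - 1) * (pi / real n) + Arg z\<bar>
        \<le> pi / 2 - (\<theta> + c * (pi / real n))"
    proof -
      have "0 \<le> c" and "1 + c \<le> real k - real j + real r - 1"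
        and "real k - real j + real r - 1 + c + (if n = 2 * r then 3 else 2) \<le> real n"
        using kj n by (auto simp: c_def)
      from abs_rotate_Arg_le_in_sector [OF assms(7) this]
      show ?thesis by simp
    qed
    show "0 \<le> \<theta> + c * (pi / real n)"
      using assms(3) by (simp add: c_def)
  qed
  then show ?thesis
    by (simp only: sin_t)
qed

theorem lemma8p4:
  fixes r n :: nat and \<theta> :: real
  assumes "r \<ge> 1"
    and "n = 2 * r \<or> n = 2 * r - 1"
    and "0 < \<theta>" and "\<theta> < pi / (2 * real n)"
  shows
    "(\<forall>k \<in> {1..r}. \<forall>z. Im (xi n k * z + zeta n r (r - k + 1) * cnj z) = 0)
   \<and> (\<forall>k \<in> {1..r}. \<forall>j \<in> {1..r}. k + j \<ge> r + 2 \<longrightarrow>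
        (\<forall>z \<in> sector n r \<theta>.
           Im (xi n k * z + zeta n r j * cnj z)
             \<ge> 2 * sin ((real k + real j - real r - 1) / real n * pi) * sin \<theta> * cmod z))
   \<and> (\<forall>k \<in> {1..n - r}. \<forall>z. Im (xi n (k + r) * z + zeta n r (n - k + 1) * cnj z) = 0)
   \<and> (\<forall>k \<in> {1..n - r}. \<forall>j \<in> {1..n - r}. k + j \<le> n - r \<longrightarrow>
        (\<forall>z \<in> sector n r \<theta>.
           Im (xi n (k + r) * z + zeta n r (j + r) * cnj z)
             \<ge> 2 * sin ((real n - real r - real k - real j + 1) / real n * pi)
                 * (if n = 2 * r then sin \<theta> else sin (pi / real n + \<theta>)) * cmod z))"
proof (intro conjI ballI allI impI)
  \<comment> \<open>The bound \<open>\<theta> < \<pi>/(2n)\<close> only makes the sector nonempty; the estimates do not need it.\<close>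
  have "0 \<le> \<theta>" using assms(3) by simp
  fix k j z
  show "Im (xi n k * z + zeta n r (r - k + 1) * cnj z) = 0" if "k \<in> {1..r}"
    using that by (intro Im_xi_zeta_first_antidiagonal) simp
  show "Im (xi n (k + r) * z + zeta n r (n - k + 1) * cnj z) = 0" if "k \<in> {1..n - r}"
    using that by (intro Im_xi_zeta_second_antidiagonal) auto
  show "Im (xi n k * z + zeta n r j * cnj z)
      \<ge> 2 * sin ((real k + real j - real r - 1) / real n * pi) * sin \<theta> * cmod z"
    if "k \<in> {1..r}" "j \<in> {1..r}" "k + j \<ge> r + 2" "z \<in> sector n r \<theta>"
    using that by (intro Im_xi_zeta_ge_first_block [OF assms(2) \<open>0 \<le> \<theta>\<close>]) simp_all
  show "Im (xi n (k + r) * z + zeta n r (j + r) * cnj z)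
      \<ge> 2 * sin ((real n - real r - real k - real j + 1) / real n * pi)
        * (if n = 2 * r then sin \<theta> else sin (pi / real n + \<theta>)) * cmod z"
    if "k \<in> {1..n - r}" "j \<in> {1..n - r}" "k + j \<le> n - r" "z \<in> sector n r \<theta>"
    using that by (intro Im_xi_zeta_ge_second_block [OF assms(2,1) \<open>0 \<le> \<theta>\<close>]) simp_all
qed

end
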